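(* Let $n\ge 3$ and $\Delta,\Delta'\in\mathcal{P}_n$, and suppose there is $i\in\mathbb{Z}_n$ such that: $lab_\Delta((i+1,i))=lab_{\Delta'}((i+1,i))=\ominus$; $lab_\Delta((i-1,i))\neq lab_{\Delta'}((i-1,i))$; and $lab_\Delta((j_1,j_2))=lab_{\Delta'}((j_1,j_2))$ for every arc $(j_1,j_2)\neq(i-1,i)$ of the form $(j,j+1)$ or $(j+1,j)$, $j\in\mathbb{Z}_n$. Then $f^{(\Delta)}_{8,n}=f^{(\Delta')}_{8,n}$.
   Context: Cells are indexed by $\mathbb{Z}_n=\{0,\dots,n-1\}$, indices modulo $n$. Rule $8$ has local rule $r_8(x_1,x_2,x_3)=\neg x_1\wedge x_2\wedge x_3$ and global function $f_{8,n}(x)_i=r_8(x_{i-1},x_i,x_{i+1})$. An update schedule is an ordered partition $\Delta=(\Delta_1,\dots,\Delta_k)$ of $\mathbb{Z}_n$ into nonempty blocks; $\mathcal{P}_n$ is the set of them. For a block $B$ let $f^{(B)}(x)_i=f_{8,n}(x)_i$ if $i\in B$ and $x_i$ otherwise; $f^{(\Delta)}_{8,n}=f^{(\Delta_k)}\circ\cdots\circ f^{(\Delta_1)}$. (The paper states the conclusion as equality of the transition digraphs with arcs $(x,f^{(\Delta)}_{8,n}(x))$, equivalent to equality of the maps.) For $u,v\in\mathbb{Z}_n$ with $u\in\Delta_a$, $v\in\Delta_b$, $lab_\Delta((u,v))=\oplus$ if $b\le a$ and $\ominus$ if $a<b$. *)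

theory Defs
  imports Main
begin

text \<open>Cells are 0..n-1 (indices modulo n); a configuration is a function nat => bool
  (cells outside 0..n-1 are never touched by the dynamics).\<close>

definition r8 :: "bool \<Rightarrow> bool \<Rightarrow> bool \<Rightarrow> bool" where
  "r8 x1 x2 x3 = (\<not> x1 \<and> x2 \<and> x3)"

definition f8 :: "nat \<Rightarrow> (nat \<Rightarrow> bool) \<Rightarrow> nat \<Rightarrow> bool" where
  "f8 n x i = r8 (x ((i + n - 1) mod n)) (x i) (x ((i + 1) mod n))"

definition block_update :: "nat \<Rightarrow> nat set \<Rightarrow> (nat \<Rightarrow> bool) \<Rightarrow> (nat \<Rightarrow> bool)" where
  "block_update n B x = (\<lambda>i. if i \<in> B then f8 n x i else x i)"

text \<open>f^(Delta) = f^(Delta_k) o ... o f^(Delta_1): fold applies the first block first.\<close>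
definition sched_update :: "nat \<Rightarrow> nat set list \<Rightarrow> (nat \<Rightarrow> bool) \<Rightarrow> (nat \<Rightarrow> bool)" where
  "sched_update n D = fold (block_update n) D"

definition ordered_partition :: "nat \<Rightarrow> nat set list \<Rightarrow> bool" where
  "ordered_partition n D \<longleftrightarrow>
     (\<forall>B\<in>set D. B \<noteq> {}) \<and>
     (\<forall>a<length D. \<forall>b<length D. a \<noteq> b \<longrightarrow> D ! a \<inter> D ! b = {}) \<and>
     \<Union>(set D) = {..<n}"

definition blk :: "nat set list \<Rightarrow> nat \<Rightarrow> nat" where
  "blk D u = (THE a. a < length D \<and> u \<in> D ! a)"

datatype label = Plus | Minus

definition lab :: "nat set list \<Rightarrow> nat \<Rightarrow> nat \<Rightarrow> label" where
  "lab D u v = (if blk D v \<le> blk D u then Plus else Minus)"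

end

theory Submission
  imports Defs
begin

text \<open>Under a block-sequential schedule the new value of cell \<open>v\<close> is \<open>r8\<close> applied to its
  neighbours, where a neighbour contributes its new value exactly when it lies in an earlier block,
  i.e. when its arc into \<open>v\<close> is labelled \<open>\<ominus>\<close>. By induction on the block of \<open>v\<close>, the labels
  of the arcs into all cells outside a set \<open>C\<close> therefore determine the dynamics, provided the
  schedules already agree on \<open>C\<close>. Here \<open>C = {i}\<close>: if \<open>i + 1\<close> is updated before \<open>i\<close>, cell \<open>i\<close>
  always becomes \<open>False\<close>, since a new value \<open>True\<close> at \<open>i + 1\<close> forces the old value at \<open>i\<close> to be
  \<open>False\<close>. So the label of \<open>(i - 1, i)\<close> is irrelevant.\<close>

lemma mod_Suc_pred_mod:
  fixes v n :: nat
  assumes "v < n" shows "((v + n - 1) mod n + 1) mod n = v"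
proof (cases v)
  case 0 with assms show ?thesis by simp
next
  case (Suc w) with assms show ?thesis by simp
qed

lemma mod_pred_Suc_mod:
  fixes v n :: nat
  assumes "v < n" shows "((v + 1) mod n + n - 1) mod n = v"
  using assms by (cases "v + 1 = n") simp_all

lemma blk_eqI:
  assumes "ordered_partition n D" and "a < length D" and "u \<in> D ! a"
  shows "blk D u = a"
  unfolding blk_def
proof (rule the_equality)
  fix b assume "b < length D \<and> u \<in> D ! b"
  with assms show "b = a" unfolding ordered_partition_def by blast
qed (use assms in simp)

lemma blk_less_length_and_mem:
  assumes "ordered_partition n D" and "u < n"
  shows "blk D u < length D \<and> u \<in> D ! blk D u"
proof -
  have "u \<in> \<Union>(set D)" using assms unfolding ordered_partition_def by auto
  then obtain a where "a < length D" "u \<in> D ! a" by (auto simp: in_set_conv_nth)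
  with blk_eqI[OF assms(1)] show ?thesis by simp
qed

lemma lab_Minus_iff: "lab D u v = Minus \<longleftrightarrow> blk D u < blk D v"
  by (simp add: lab_def)

lemma lab_eq_iff: "lab D u v = lab D' u v \<longleftrightarrow> (blk D u < blk D v \<longleftrightarrow> blk D' u < blk D' v)"
  by (auto simp: lab_def)

lemma sched_update_outside:
  assumes "ordered_partition n D" and "\<not> u < n"
  shows "sched_update n D x u = x u"
proof -
  have fold_outside: "\<forall>B\<in>set L. u \<notin> B \<Longrightarrow> fold (block_update n) L x u = x u" for L
    by (induction L arbitrary: x) (auto simp: block_update_def)
  have "\<forall>B\<in>set D. u \<notin> B" using assms unfolding ordered_partition_def by auto
  then show ?thesis unfolding sched_update_def by (rule fold_outside)
qed

lemma fold_block_update_take_Suc: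
  "k < length D \<Longrightarrow> fold (block_update n) (take (Suc k) D) x
     = block_update n (D ! k) (fold (block_update n) (take k D) x)"
  by (simp add: take_Suc_conv_app_nth)

lemma fold_block_update_take:
  assumes "ordered_partition n D" and "u < n" and "k \<le> length D"
  shows "fold (block_update n) (take k D) x u =
    (if k \<le> blk D u then x u else sched_update n D x u)"
proof -
  have upto_own_block: "fold (block_update n) (take k D) x u =
    (if k \<le> blk D u then x u else fold (block_update n) (take (Suc (blk D u)) D) x u)"
    if "k \<le> length D" for k
    using that
  proof (induction k)
    case (Suc k)
    then have k: "k < length D" by simp
    show ?case
    proof (cases "k = blk D u")
      case False
      then have "u \<notin> D ! k" using blk_eqI[OF assms(1) k] by blast
      then have "fold (block_update n) (take (Suc k) D) x u = fold (block_update n) (take k D) x u"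
        using fold_block_update_take_Suc[OF k] by (simp add: block_update_def)
      with Suc k False show ?thesis by auto
    qed simp
  qed simp
  have "blk D u < length D" using blk_less_length_and_mem[OF assms(1,2)] ..
  then have "sched_update n D x u = fold (block_update n) (take (Suc (blk D u)) D) x u"
    using upto_own_block[of "length D"] by (simp add: sched_update_def)
  with upto_own_block[OF assms(3)] show ?thesis by simp
qed

lemma sched_update_eq_r8:
  assumes D: "ordered_partition n D" and v: "v < n"
  shows "sched_update n D x v = r8
     (if blk D ((v + n - 1) mod n) < blk D v
      then sched_update n D x ((v + n - 1) mod n) else x ((v + n - 1) mod n))
     (x v)
     (if blk D ((v + 1) mod n) < blk D v
      then sched_update n D x ((v + 1) mod n) else x ((v + 1) mod n))"
proof -
  let ?before = "fold (block_update n) (take (blk D v) D) x"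
  have v_blk: "blk D v < length D" "v \<in> D ! blk D v"
    using blk_less_length_and_mem[OF D v] by auto
  have before: "?before u = (if blk D u < blk D v then sched_update n D x u else x u)"
    if "u < n" for u
    using fold_block_update_take[OF D that, of "blk D v"] v_blk by auto
  have "sched_update n D x v = fold (block_update n) (take (Suc (blk D v)) D) x v"
    using fold_block_update_take[OF D v, of "Suc (blk D v)"] v_blk by simp
  also have "\<dots> = f8 n ?before v"
    using v_blk by (simp add: fold_block_update_take_Suc block_update_def)
  finally show ?thesis
    using before v by (simp add: f8_def)
qed

lemma sched_update_eqI:
  assumes D: "ordered_partition n D" and D': "ordered_partition n D'"
    and agree: "\<And>v x. v \<in> C \<Longrightarrow> sched_update n D x v = sched_update n D' x v"
    and lab_pred: "\<And>v. v < n \<Longrightarrow> v \<notin> C \<Longrightarrow>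
      lab D ((v + n - 1) mod n) v = lab D' ((v + n - 1) mod n) v"
    and lab_succ: "\<And>v. v < n \<Longrightarrow> v \<notin> C \<Longrightarrow>
      lab D ((v + 1) mod n) v = lab D' ((v + 1) mod n) v"
  shows "sched_update n D = sched_update n D'"
proof (intro ext)
  fix x v
  have by_block: "\<forall>v<n. blk D v = m \<longrightarrow> sched_update n D x v = sched_update n D' x v" for m
  proof (induction m rule: less_induct)
    case (less m)
    show ?case
    proof (intro allI impI)
      fix v assume v: "v < n" and m: "blk D v = m"
      have IH: "sched_update n D x u = sched_update n D' x u"
        if "u < n" "blk D u < blk D v" for u
        using less.IH[of "blk D u", rule_format, of u] that m by simp
      show "sched_update n D x v = sched_update n D' x v"
      proof (cases "v \<in> C")
        case False
        let ?p = "(v + n - 1) mod n" and ?s = "(v + 1) mod n"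
        have "blk D ?p < blk D v \<longleftrightarrow> blk D' ?p < blk D' v"
          "blk D ?s < blk D v \<longleftrightarrow> blk D' ?s < blk D' v"
          using lab_pred[OF v False] lab_succ[OF v False] by (simp_all only: lab_eq_iff)
        moreover have "?p < n" "?s < n" using v by auto
        ultimately have
          "(if blk D ?p < blk D v then sched_update n D x ?p else x ?p) =
           (if blk D' ?p < blk D' v then sched_update n D' x ?p else x ?p)"
          "(if blk D ?s < blk D v then sched_update n D x ?s else x ?s) =
           (if blk D' ?s < blk D' v then sched_update n D' x ?s else x ?s)"
          using IH by auto
        then show ?thesis
          by (simp only: sched_update_eq_r8[OF D v] sched_update_eq_r8[OF D' v])
      qed (use agree in blast)
    qed
  qed
  show "sched_update n D x v = sched_update n D' x v"
  proof (cases "v < n")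
    case True
    then show ?thesis using by_block[of "blk D v"] by blast
  next
    case False
    then show ?thesis using sched_update_outside[OF D] sched_update_outside[OF D'] by simp
  qed
qed

lemma sched_update_eq_False:
  assumes D: "ordered_partition n D" and i: "i < n"
    and "lab D ((i + 1) mod n) i = Minus"
  shows "sched_update n D x i = False"
proof -
  have earlier: "blk D ((i + 1) mod n) < blk D i" using assms(3) by (simp add: lab_Minus_iff)
  have "(i + 1) mod n < n" using i by simp
  then have "sched_update n D x ((i + 1) mod n) \<longrightarrow> \<not> x i"
    using sched_update_eq_r8[OF D, of "(i + 1) mod n" x] earlier mod_pred_Suc_mod[OF i]
    by (simp add: r8_def)
  then show ?thesis
    using sched_update_eq_r8[OF D i, of x] earlier by (auto simp: r8_def)
qed

theorem mainTheorem15: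
  fixes n i :: nat and D D' :: "nat set list"
  assumes "n \<ge> 3"
    and "ordered_partition n D" and "ordered_partition n D'"
    and "i < n"
    and "lab D ((i + 1) mod n) i = Minus" and "lab D' ((i + 1) mod n) i = Minus"
    and "lab D ((i + n - 1) mod n) i \<noteq> lab D' ((i + n - 1) mod n) i"
    and "\<forall>j<n. (j, (j + 1) mod n) \<noteq> ((i + n - 1) mod n, i) \<longrightarrow>
                lab D j ((j + 1) mod n) = lab D' j ((j + 1) mod n)"
    and "\<forall>j<n. ((j + 1) mod n, j) \<noteq> ((i + n - 1) mod n, i) \<longrightarrow>
                lab D ((j + 1) mod n) j = lab D' ((j + 1) mod n) j"
  shows "sched_update n D = sched_update n D'"
proof (rule sched_update_eqI[OF assms(2,3), where C = "{i}"])
  show "sched_update n D x v = sched_update n D' x v" if "v \<in> {i}" for v x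
    using that sched_update_eq_False[OF assms(2,4,5)] sched_update_eq_False[OF assms(3,4,6)]
    by simp
next
  fix v assume v: "v < n" and "v \<notin> {i}"
  then have "((v + 1) mod n, v) \<noteq> ((i + n - 1) mod n, i)" by simp
  with v show "lab D ((v + 1) mod n) v = lab D' ((v + 1) mod n) v"
    using assms(9) by blast
  let ?p = "(v + n - 1) mod n"
  have "?p < n" and "(?p, (?p + 1) mod n) \<noteq> ((i + n - 1) mod n, i)"
    using v \<open>v \<notin> {i}\<close> mod_Suc_pred_mod[OF v] by simp_all
  then have "lab D ?p ((?p + 1) mod n) = lab D' ?p ((?p + 1) mod n)"
    using assms(8) by blast
  then show "lab D ?p v = lab D' ?p v"
    by (simp only: mod_Suc_pred_mod[OF v])
qed

end
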